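(* Let $n\ge 3$ be odd. Then the row span $[C]$ of the cyclic matrix $C$ is the unique minimizer of $E$ on $Gr^{>0}(2,n)$.
   Context: For a real $2\times n$ matrix $X$ and $1\le i<j\le n$, $\Delta_{i,j}(X)$ is the determinant of the $2\times2$ submatrix of columns $i,j$. $Gr^{>0}(2,n)$ is the set of 2-dimensional subspaces of $\mathbb{R}^n$ having a spanning $2\times n$ matrix $X$ (rows spanning the subspace) with $\Delta_{i,j}(X)>0$ for all $i<j$; $E(x)=\max_{i<j}\Delta_{i,j}(X)/\min_{i<j}\Delta_{i,j}(X)$ (independent of the choice of $X$). The cyclic matrix $C$ is the $2\times n$ matrix whose $m$-th column is $(\cos((m-1)\pi/n),\sin((m-1)\pi/n))^T$, $m=1,\dots,n$. *)

theory Defs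
  imports Complex_Main
begin

text \<open>A real 2 x n matrix is represented by its columns: X m = (X_{1,m+1}, X_{2,m+1})
  for 0 <= m < n (0-based column index). Vectors of R^n are functions nat => real
  vanishing outside {0..<n}.\<close>

definition minor :: "(nat \<Rightarrow> real \<times> real) \<Rightarrow> nat \<Rightarrow> nat \<Rightarrow> real" where
  "minor X i j = fst (X i) * snd (X j) - snd (X i) * fst (X j)"

definition rowspan :: "nat \<Rightarrow> (nat \<Rightarrow> real \<times> real) \<Rightarrow> (nat \<Rightarrow> real) set" where
  "rowspan n X = {v. \<exists>a b. \<forall>m. v m = (if m < n then a * fst (X m) + b * snd (X m) else 0)}"

definition totally_positive :: "nat \<Rightarrow> (nat \<Rightarrow> real \<times> real) \<Rightarrow> bool" where
  "totally_positive n X \<longleftrightarrow> (\<forall>i j. i < j \<and> j < n \<longrightarrow> minor X i j > 0)"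

definition Gr_pos :: "nat \<Rightarrow> (nat \<Rightarrow> real) set set" where
  "Gr_pos n = {V. \<exists>X. rowspan n X = V \<and> totally_positive n X}"

definition minors_set :: "nat \<Rightarrow> (nat \<Rightarrow> real \<times> real) \<Rightarrow> real set" where
  "minors_set n X = {minor X i j | i j. i < j \<and> j < n}"

definition E :: "nat \<Rightarrow> (nat \<Rightarrow> real) set \<Rightarrow> real" where
  "E n V = (let X = (SOME X. rowspan n X = V \<and> totally_positive n X)
            in Max (minors_set n X) / Min (minors_set n X))"

definition cyclic :: "nat \<Rightarrow> nat \<Rightarrow> real \<times> real" where
  "cyclic n m = (cos (real m * pi / real n), sin (real m * pi / real n))"

end

theory Submission
  imports Defs
begin

(*
  Continue the columns v_0, ..., v_{n-1} of a totally positive X antiperiodically, v_{a+n} = -v_a.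
  In the resulting walk every window of n consecutive vectors has positive wedges, and these
  wedges are exactly the minors of X.  For such a walk the tridiagonal quadratic form with
  off-diagonal weights 1/edge and diagonal coefficients wedge a (a+2) / (edge a * edge (a+1))
  is nonnegative on antiperiodic sequences (Picone's identity); evaluating it on cos and sin of
  a pi / n gives  sum coef >= 2 cos (pi / n) * sum 1/edge.

  For n = 2k+1 rescale the vectors so that all wedges at distance k become 1.  The Pluecker
  relations then read  coef a = 1/edge (a+1) + 1/edge a - edge (a+k+1),  hence
  sum edge <= (2 - 2 cos (pi/n)) * sum 1/edge  for the rescaled walk.  Since
  edge a * edge (a+k) >= (m/M)^2, where m is the least edge and M the largest wedge at
  distance k of the original walk, this yields m <= 2 sin (pi/(2n)) * M, so
  E(X) >= M/m >= 1 / (2 sin (pi/(2n))) >= E(C).  If E(X) = E(C) every inequality is tight: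
  all edges and all distance-k wedges are constant, the walk satisfies the recurrence of
  cos (a pi / n) and sin (a pi / n), and X spans the same plane as C.
*)

lemma sum_lessThan_shift_periodic:
  fixes F :: "nat \<Rightarrow> 'a::cancel_comm_monoid_add"
  assumes "\<And>a. F (a + n) = F a"
  shows "(\<Sum>a<n. F (a + j)) = (\<Sum>a<n. F a)"
proof (induction j)
  case (Suc j)
  have "(\<Sum>a<Suc n. F (a + j)) = F j + (\<Sum>a<n. F (a + Suc j))"
    by (subst sum.lessThan_Suc_shift) simp
  moreover have "(\<Sum>a<Suc n. F (a + j)) = (\<Sum>a<n. F (a + j)) + F j"
    using assms[of j] by (simp add: add.commute)
  ultimately show ?case using Suc by (simp add: add.commute[of "F j"])
qed simp

lemma periodic_add_mult:
  fixes f :: "nat \<Rightarrow> 'a" and n :: nat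
  assumes "\<And>a. f (a + n) = f a"
  shows "f (b + m * n) = f b"
proof (induction m)
  case (Suc m)
  have "b + Suc m * n = (b + m * n) + n" by simp
  then show ?case using Suc assms by metis
qed simp

lemma periodic_mod:
  fixes f :: "nat \<Rightarrow> 'a" and n :: nat
  assumes "\<And>a. f (a + n) = f a"
  shows "f a = f (a mod n)"
  using periodic_add_mult[of f n "a mod n" "a div n", OF assms] by simp

lemma window_div_mod_cases:
  fixes a b n :: nat
  assumes "a < b" "b < a + n"
  shows "b div n = a div n \<and> a mod n < b mod n \<or> b div n = Suc (a div n) \<and> b mod n < a mod n"
proof -
  have "a div n \<le> b div n" "b div n \<le> (a + n) div n"
    using assms by (simp_all only: div_le_mono less_imp_le)
  moreover have "(a + n) div n = Suc (a div n)"
    using assms by simp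
  ultimately consider "b div n = a div n" | "b div n = Suc (a div n)"
    by linarith
  then show ?thesis
  proof cases
    case 1
    then have "b div n * n = a div n * n" by simp
    then show ?thesis using 1 assms div_mult_mod_eq[of a n] div_mult_mod_eq[of b n] by linarith
  next
    case 2
    then have "b div n * n = a div n * n + n" by simp
    then show ?thesis using 2 assms div_mult_mod_eq[of a n] div_mult_mod_eq[of b n] by linarith
  qed
qed

lemma det2_chain_identity:
  fixes a1 a2 b1 b2 c1 c2 p1 p2 r1 r2 :: real
  assumes "b1 * p2 - b2 * p1 = 1" "a1 * p2 - a2 * p1 = 1" "c1 * r2 - c2 * r1 = 1" "b1 * r2 - b2 * r1 = 1"
  shows "a1 * c2 - a2 * c1
    = (a1 * b2 - a2 * b1) + (b1 * c2 - b2 * c1) - (a1 * b2 - a2 * b1) * (b1 * c2 - b2 * c1) * (p1 * r2 - p2 * r1)"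
  using assms by algebra

lemma eq_of_mult_le_sq_lower:
  fixes m u v :: real
  assumes "0 < m" "m \<le> u" "m \<le> v" "u * v \<le> m * m"
  shows "u = m"
  using assms by (smt (verit, best) mult_left_mono mult_strict_right_mono)

lemma eq_of_mult_ge_sq_upper:
  fixes M u v :: real
  assumes "0 < v" "u \<le> M" "v \<le> M" "M * M \<le> u * v"
  shows "u = M"
  using assms by (smt (verit, best) mult_left_mono mult_strict_right_mono)

lemma second_order_recurrence_cos_sin:
  fixes f :: "nat \<Rightarrow> real"
  assumes rec: "\<And>a. f (Suc (Suc a)) = 2 * cos \<theta> * f (Suc a) - f a" and "sin \<theta> \<noteq> 0"
  shows "f a = f 0 * cos (real a * \<theta>) + (f 1 - cos \<theta> * f 0) / sin \<theta> * sin (real a * \<theta>)"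
proof -
  define g where "g a = f 0 * cos (real a * \<theta>) + (f 1 - cos \<theta> * f 0) / sin \<theta> * sin (real a * \<theta>)" for a
  have g_rec: "g (Suc (Suc a)) = 2 * cos \<theta> * g (Suc a) - g a" for a
  proof -
    have "real (Suc (Suc a)) * \<theta> = real (Suc a) * \<theta> + \<theta>" "real a * \<theta> = real (Suc a) * \<theta> - \<theta>"
      by (simp_all add: algebra_simps)
    then show ?thesis
      unfolding g_def by (simp only: cos_add cos_diff sin_add sin_diff) (simp add: algebra_simps)
  qed
  have "f a = g a \<and> f (Suc a) = g (Suc a)"
  proof (induction a)
    case 0
    show ?case using \<open>sin \<theta> \<noteq> 0\<close> by (simp add: g_def)
  next
    case (Suc a)
    then show ?case using rec[of a] g_rec[of a] by simp
  qed
  then show ?thesis by (simp add: g_def)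
qed

lemma two_sub_two_cos_pi_div:
  fixes n :: nat
  shows "2 - 2 * cos (pi / n) = (2 * sin (pi / (2 * n)))\<^sup>2"
proof -
  have "pi / n = 2 * (pi / (2 * n))"
    by simp
  then show ?thesis
    by (subst \<open>pi / n = _\<close>) (simp only: cos_double_sin, simp add: power_mult_distrib)
qed

lemma sin_multiple_pi_div_bounds:
  fixes n d :: nat
  assumes "odd n" "1 \<le> d" "d < n"
  shows "sin (pi / n) \<le> sin (real d * pi / n) \<and> sin (real d * pi / n) \<le> cos (pi / (2 * n))"
proof -
  have n: "0 < real n" using assms by simp
  text \<open>By the symmetry \<open>d \<leftrightarrow> n - d\<close>, reduce to \<open>2 e \<le> n - 1\<close>, where the angle lies in
    \<open>[pi / n, pi / 2 - pi / (2 n)]\<close> and sine is increasing.\<close>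
  obtain e where e: "1 \<le> e" "2 * real e \<le> real n - 1" "sin (real d * pi / n) = sin (real e * pi / n)"
  proof (cases "2 * d < n")
    case True
    then show ?thesis using assms that[of d] by linarith
  next
    case False
    have "real (n - d) * pi / n = pi - real d * pi / n"
      using assms n by (simp add: of_nat_diff field_simps)
    moreover have "2 * d \<noteq> n" using \<open>odd n\<close> by auto
    ultimately show ?thesis
      using False assms that[of "n - d"] by (simp add: of_nat_diff)
  qed
  have "pi / n \<le> real e * pi / n"
    using e(1) n by (simp add: divide_right_mono)
  moreover have "real e * pi / n \<le> pi / 2 - pi / (2 * n)"
  proof -
    have "real e * pi \<le> (real n - 1) / 2 * pi"
      using e(2) by (intro mult_right_mono) simp_all
    then show ?thesis
      using n by (simp add: field_simps)
  qed
  moreover have "- (pi / 2) \<le> pi / n" "pi / 2 - pi / (2 * n) \<le> pi / 2"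
    using n by (simp_all add: order.trans[of _ 0])
  ultimately have "sin (pi / n) \<le> sin (real e * pi / n) \<and> sin (real e * pi / n) \<le> sin (pi / 2 - pi / (2 * n))"
    by (smt (verit) sin_monotone_2pi_le)
  then show ?thesis
    using e(3) by (simp add: sin_cos_eq)
qed

section \<open>A Jacobi form of an antiperiodic walk\<close>

definition antiperiodic :: "nat \<Rightarrow> (nat \<Rightarrow> real) \<Rightarrow> bool" where
  "antiperiodic n f \<longleftrightarrow> (\<forall>a. f (a + n) = - f a)"

locale antiperiodic_walk =
  fixes n :: nat and x y :: "nat \<Rightarrow> real"
  assumes n_ge_3: "3 \<le> n"
    and antiperiodic_x: "antiperiodic n x" and antiperiodic_y: "antiperiodic n y"
    and window_pos: "\<And>a b. a < b \<Longrightarrow> b < a + n \<Longrightarrow> 0 < x a * y b - y a * x b"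
begin

definition wedge :: "nat \<Rightarrow> nat \<Rightarrow> real" where
  "wedge a b = x a * y b - y a * x b"

definition edge :: "nat \<Rightarrow> real" where
  "edge a = wedge a (Suc a)"

definition coef :: "nat \<Rightarrow> real" where
  "coef a = wedge a (Suc (Suc a)) / (edge a * edge (Suc a))"

definition jacobi_form :: "(nat \<Rightarrow> real) \<Rightarrow> real" where
  "jacobi_form f = (\<Sum>a<n. coef a * (f (Suc a))\<^sup>2 - 2 * f a * f (Suc a) / edge a)"

definition jacobi_solution :: "(nat \<Rightarrow> real) \<Rightarrow> bool" where
  "jacobi_solution h \<longleftrightarrow> antiperiodic n h \<and>
     (\<forall>a. h a / edge a + h (Suc (Suc a)) / edge (Suc a) = coef a * h (Suc a))"

lemma x_add_n: "x (a + n) = - x a" and y_add_n: "y (a + n) = - y a"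
  using antiperiodic_x antiperiodic_y by (simp_all add: antiperiodic_def)

lemma wedge_pos: "a < b \<Longrightarrow> b < a + n \<Longrightarrow> 0 < wedge a b"
  unfolding wedge_def by (rule window_pos)

lemma wedge_swap: "wedge b a = - wedge a b"
  by (simp add: wedge_def)

lemma edge_pos: "0 < edge a"
  unfolding edge_def using n_ge_3 by (intro wedge_pos) auto

lemma wedge_add_n_right: "wedge c (a + n) = - wedge c a"
  by (simp add: wedge_def x_add_n y_add_n)

lemma wedge_add_n: "wedge (a + n) (b + n) = wedge a b"
  by (simp add: wedge_def x_add_n y_add_n)

lemma edge_add_n: "edge (a + n) = edge a"
  using wedge_add_n[of a "Suc a"] by (simp add: edge_def)

lemma wedge_three_term_x:
  "edge (Suc a) * x a - wedge a (Suc (Suc a)) * x (Suc a) + edge a * x (Suc (Suc a)) = 0"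
  unfolding edge_def wedge_def by algebra

lemma wedge_three_term_y:
  "edge (Suc a) * y a - wedge a (Suc (Suc a)) * y (Suc a) + edge a * y (Suc (Suc a)) = 0"
  unfolding edge_def wedge_def by algebra

lemma wedge_three_term:
  "wedge c a / edge a + wedge c (Suc (Suc a)) / edge (Suc a) = coef a * wedge c (Suc a)"
proof -
  have "wedge c a * edge (Suc a) + wedge c (Suc (Suc a)) * edge a
        = wedge c (Suc a) * wedge a (Suc (Suc a))"
    unfolding edge_def wedge_def by algebra
  with edge_pos[of a] edge_pos[of "Suc a"] show ?thesis
    unfolding coef_def by (simp add: field_simps)
qed

lemma jacobi_solution_wedge: "jacobi_solution (\<lambda>a. t * wedge c a)"
  unfolding jacobi_solution_def antiperiodic_def
  using wedge_three_term[of c] wedge_add_n_right[of c]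
  by (simp flip: distrib_left times_divide_eq_right add: mult.left_commute)

lemma jacobi_form_cross_term:
  assumes e: "antiperiodic n e" and h: "jacobi_solution h"
  shows "(\<Sum>a<n. coef a * e (Suc a) * h (Suc a) - e a * h (Suc a) / edge a
                - h a * e (Suc a) / edge a) = 0"
proof -
  have h_per: "h (a + n) = - h a"
    and h_rec: "h a / edge a + h (Suc (Suc a)) / edge (Suc a) = coef a * h (Suc a)" for a
    using h by (auto simp: jacobi_solution_def antiperiodic_def)
  have shift: "(\<Sum>a<n. e (a + 1) * h (Suc (a + 1)) / edge (a + 1)) = (\<Sum>a<n. e a * h (Suc a) / edge a)"
    using e by (intro sum_lessThan_shift_periodic)
      (simp add: antiperiodic_def h_per edge_add_n flip: add_Suc)
  have "(\<Sum>a<n. coef a * e (Suc a) * h (Suc a) - e a * h (Suc a) / edge a - h a * e (Suc a) / edge a)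
      = (\<Sum>a<n. coef a * e (Suc a) * h (Suc a) - h a * e (Suc a) / edge a)
        - (\<Sum>a<n. e (Suc a) * h (Suc (Suc a)) / edge (Suc a))"
    using shift by (simp add: sum_subtractf)
  also have "\<dots> = (\<Sum>a<n. e (Suc a) * (coef a * h (Suc a) - h a / edge a - h (Suc (Suc a)) / edge (Suc a)))"
    by (simp add: sum_subtractf[symmetric] algebra_simps)
  also have "\<dots> = 0"
    using h_rec by (simp add: algebra_simps)
  finally show ?thesis .
qed

lemma jacobi_form_add_solution:
  assumes e: "antiperiodic n e" and h: "jacobi_solution h"
  shows "jacobi_form (\<lambda>a. e a + h a) = jacobi_form e"
proof -
  have "antiperiodic n h"
    using h by (simp add: jacobi_solution_def)
  then have h_self: "(\<Sum>a<n. coef a * h (Suc a) * h (Suc a) - h a * h (Suc a) / edge a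
                   - h a * h (Suc a) / edge a) = 0"
    using jacobi_form_cross_term h by blast
  have "jacobi_form (\<lambda>a. e a + h a) = jacobi_form e
     + 2 * (\<Sum>a<n. coef a * e (Suc a) * h (Suc a) - e a * h (Suc a) / edge a - h a * e (Suc a) / edge a)
     + (\<Sum>a<n. coef a * h (Suc a) * h (Suc a) - h a * h (Suc a) / edge a - h a * h (Suc a) / edge a)"
    unfolding jacobi_form_def sum_distrib_left sum.distrib[symmetric]
    by (intro sum.cong refl)
      (simp add: algebra_simps power2_eq_square diff_divide_distrib add_divide_distrib)
  then show ?thesis
    using jacobi_form_cross_term[OF e h] h_self by simp
qed

text \<open>Picone's identity: with the solution \<open>u = wedge 0\<close>, positive on \<open>]0, n[\<close> and vanishing
  at \<open>0\<close> and \<open>n\<close>, each summand of the form dominates the increment of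
  \<open>e\<^sup>2 u' / (edge u)\<close>, up to a square.\<close>

lemma jacobi_form_nonneg_vanishing:
  assumes e: "antiperiodic n e" and e0: "e 0 = 0"
  shows "0 \<le> jacobi_form e"
proof -
  define u where "u a = wedge 0 a" for a
  have u0: "u 0 = 0" and un: "u n = 0"
    using wedge_add_n_right[of 0 0] by (simp_all add: u_def wedge_def)
  have u_pos: "0 < a \<Longrightarrow> a < n \<Longrightarrow> 0 < u a" for a
    unfolding u_def by (rule wedge_pos) auto
  have u_rec: "u a / edge a + u (Suc (Suc a)) / edge (Suc a) = coef a * u (Suc a)" for a
    unfolding u_def by (rule wedge_three_term)
  have en: "e n = 0"
    using e e0 unfolding antiperiodic_def by (metis add_0 neg_0_equal_iff_equal)
  define \<Phi> where "\<Phi> a = (if u a = 0 then 0 else (e a)\<^sup>2 * u (Suc a) / (edge a * u a))" for a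
  have step: "\<Phi> (Suc a) - \<Phi> a \<le> coef a * (e (Suc a))\<^sup>2 - 2 * e a * e (Suc a) / edge a"
    if "a < n" for a
  proof -
    consider "a = 0" | "Suc a = n" | "0 < a \<and> Suc a < n" using \<open>a < n\<close> by linarith
    then show ?thesis
    proof cases
      case 1
      have "0 < u 1" using u_pos n_ge_3 by auto
      moreover have "coef 0 * u 1 = u 2 / edge 1"
        using u_rec[of 0] u0 by (simp add: numeral_2_eq_2)
      ultimately have "\<Phi> 1 = coef 0 * (e 1)\<^sup>2"
        using edge_pos[of 1] by (simp add: \<Phi>_def numeral_2_eq_2 field_simps)
      then show ?thesis using 1 e0 u0 by (simp add: \<Phi>_def)
    next
      case 2
      then show ?thesis using en un by (simp add: \<Phi>_def)
    next
      case 3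
      have ua: "0 < u a" and ua': "0 < u (Suc a)" using u_pos 3 by auto
      have coef_a: "coef a = (u a / edge a + u (Suc (Suc a)) / edge (Suc a)) / u (Suc a)"
        using u_rec[of a] ua' by (simp add: field_simps)
      have "coef a * (e (Suc a))\<^sup>2 - 2 * e a * e (Suc a) / edge a - (\<Phi> (Suc a) - \<Phi> a)
          = (e (Suc a) * u a - e a * u (Suc a))\<^sup>2 / (edge a * u a * u (Suc a))"
        unfolding coef_a \<Phi>_def using ua ua' edge_pos[of a] edge_pos[of "Suc a"]
        by (simp add: field_simps power2_eq_square)
      moreover have "0 \<le> (e (Suc a) * u a - e a * u (Suc a))\<^sup>2 / (edge a * u a * u (Suc a))"
        using ua ua' edge_pos[of a] by simp
      ultimately show ?thesis by linarith
    qed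
  qed
  have "\<Phi> n - \<Phi> 0 = (\<Sum>a<n. \<Phi> (Suc a) - \<Phi> a)"
    by (rule sum_lessThan_telescope[symmetric])
  also have "\<dots> \<le> jacobi_form e"
    unfolding jacobi_form_def by (rule sum_mono) (rule step, simp)
  finally show ?thesis using un u0 by (simp add: \<Phi>_def)
qed

lemma jacobi_form_nonneg:
  assumes f: "antiperiodic n f"
  shows "0 \<le> jacobi_form f"
proof -
  have w10: "wedge 1 0 \<noteq> 0"
    using edge_pos[of 0] wedge_swap[of 1 0] by (simp add: edge_def)
  define h where "h a = f 0 / wedge 1 0 * wedge 1 a" for a
  have h: "jacobi_solution h"
    unfolding h_def by (rule jacobi_solution_wedge)
  then have e: "antiperiodic n (\<lambda>a. f a - h a)"
    using f by (simp add: jacobi_solution_def antiperiodic_def)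
  have "jacobi_form f = jacobi_form (\<lambda>a. f a - h a)"
    using jacobi_form_add_solution[OF e h] by simp
  also have "0 \<le> \<dots>"
    using w10 by (intro jacobi_form_nonneg_vanishing[OF e]) (simp add: h_def)
  finally show ?thesis .
qed

lemma coef_sum_ge: "2 * cos (pi / n) * (\<Sum>a<n. 1 / edge a) \<le> (\<Sum>a<n. coef a)"
proof -
  define \<theta> where "\<theta> = pi / n"
  have add_n: "(real a + real n) * \<theta> = real a * \<theta> + pi" for a
    using n_ge_3 by (simp add: \<theta>_def algebra_simps)
  have "0 \<le> jacobi_form (\<lambda>a. cos (real a * \<theta>))" "0 \<le> jacobi_form (\<lambda>a. sin (real a * \<theta>))"
    by (intro jacobi_form_nonneg; simp add: antiperiodic_def add_n)+
  moreover have "jacobi_form (\<lambda>a. cos (real a * \<theta>)) + jacobi_form (\<lambda>a. sin (real a * \<theta>))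
      = (\<Sum>a<n. coef a - 2 * cos \<theta> / edge a)"
    unfolding jacobi_form_def sum.distrib[symmetric]
  proof (intro sum.cong refl)
    fix a
    define c where "c = cos (real a * \<theta>)"
    define s where "s = sin (real a * \<theta>)"
    define c' where "c' = cos (real (Suc a) * \<theta>)"
    define s' where "s' = sin (real (Suc a) * \<theta>)"
    have "cos \<theta> = cos (real (Suc a) * \<theta> - real a * \<theta>)"
      by (simp add: algebra_simps)
    then have "cos \<theta> = c * c' + s * s'"
      by (simp add: c_def s_def c'_def s'_def cos_diff mult.commute)
    moreover have "s'\<^sup>2 + c'\<^sup>2 = 1"
      by (simp add: c'_def s'_def)
    moreover have "coef a * c'\<^sup>2 - 2 * c * c' / edge a + (coef a * s'\<^sup>2 - 2 * s * s' / edge a)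
        = coef a * (s'\<^sup>2 + c'\<^sup>2) - 2 * (c * c' + s * s') / edge a"
      by (simp add: algebra_simps add_divide_distrib diff_divide_distrib)
    ultimately show "coef a * c'\<^sup>2 - 2 * c * c' / edge a + (coef a * s'\<^sup>2 - 2 * s * s' / edge a)
        = coef a - 2 * cos \<theta> / edge a"
      by simp
  qed
  ultimately show ?thesis
    by (simp add: \<theta>_def sum_subtractf sum_distrib_left)
qed

end

section \<open>Walks of odd period\<close>

locale odd_antiperiodic_walk = antiperiodic_walk +
  fixes k :: nat
  assumes n_eq: "n = 2 * k + 1" and k_pos: "1 \<le> k"
begin

definition diag :: "nat \<Rightarrow> real" where
  "diag a = wedge a (a + k)"

text \<open>Since \<open>n\<close> is odd, \<open>a \<mapsto> a + k\<close> runs through an odd cycle modulo \<open>n\<close>, so the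
  alternating product below is the unique positive solution of \<open>scale a * scale (a + k) = diag a\<close>.\<close>

definition scale :: "nat \<Rightarrow> real" where
  "scale a = (\<Prod>j<n. diag (a + j * k) powr ((-1) ^ j / 2))"

lemma diag_pos: "0 < diag a"
  unfolding diag_def using n_eq k_pos by (intro wedge_pos) auto

lemma diag_add_n: "diag (a + n) = diag a"
  using wedge_add_n[of a "a + k"] by (simp add: diag_def add.commute add.left_commute)

lemma diag_add_mult_n: "diag (a + m * n) = diag a"
  by (rule periodic_add_mult) (rule diag_add_n)

lemma wedge_Suc_diag: "wedge a (a + k + 1) = diag (a + k + 1)"
proof -
  have "a + k + 1 + k = a + n" using n_eq by simp
  then have "diag (a + k + 1) = wedge (a + k + 1) (a + n)"
    by (simp only: diag_def)
  then show ?thesis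
    using wedge_add_n_right[of "a + k + 1" a] wedge_swap[of "a + k + 1" a] by simp
qed

lemma scale_pos: "0 < scale a"
  unfolding scale_def using diag_pos by (intro prod_pos) (metis powr_gt_zero order_less_irrefl)

lemma scale_add_n: "scale (a + n) = scale a"
proof -
  have "diag (a + n + j * k) = diag (a + j * k)" for j
    using diag_add_n[of "a + j * k"] by (simp add: ac_simps)
  then show ?thesis
    unfolding scale_def by simp
qed

lemma scale_mult: "scale a * scale (a + k) = diag a"
proof -
  have lt: "{..<n} = {..<Suc (2 * k)}" using n_eq by simp
  have "scale a = diag a powr (1 / 2) * (\<Prod>j<2 * k. diag (a + Suc j * k) powr (- ((-1) ^ j / 2)))"
    (is "_ = _ * ?P")
    unfolding scale_def lt prod.lessThan_Suc_shift by simp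
  moreover have "scale (a + k) = (\<Prod>j<2 * k. diag (a + Suc j * k) powr ((-1) ^ j / 2)) * diag a powr (1 / 2)"
    (is "_ = ?Q * _")
  proof -
    have "a + k + 2 * k * k = a + k * n" using n_eq by (simp add: algebra_simps)
    then show ?thesis
      unfolding scale_def lt prod.lessThan_Suc using diag_add_mult_n[of a k] by (simp add: ac_simps)
  qed
  moreover have "?P * ?Q = 1"
    using diag_pos by (simp add: prod.distrib[symmetric] powr_add[symmetric] order_less_imp_not_eq2)
  ultimately have "scale a * scale (a + k) = diag a powr (1 / 2) * diag a powr (1 / 2)"
    by (simp add: ac_simps)
  also have "\<dots> = diag a"
    using diag_pos[of a] by (simp add: powr_add[symmetric])
  finally show ?thesis .
qed

lemma normalized_walk: "antiperiodic_walk n (\<lambda>a. x a / scale a) (\<lambda>a. y a / scale a)"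
proof
  show "3 \<le> n" by (rule n_ge_3)
  show "antiperiodic n (\<lambda>a. x a / scale a)" "antiperiodic n (\<lambda>a. y a / scale a)"
    by (simp_all add: antiperiodic_def x_add_n y_add_n scale_add_n)
  show "0 < x a / scale a * (y b / scale b) - y a / scale a * (x b / scale b)"
    if "a < b" "b < a + n" for a b
    using wedge_pos[OF that] scale_pos[of a] scale_pos[of b]
    by (simp add: wedge_def diff_divide_distrib[symmetric])
qed

end

sublocale odd_antiperiodic_walk \<subseteq> normalized: antiperiodic_walk n "\<lambda>a. x a / scale a" "\<lambda>a. y a / scale a"
  by (rule normalized_walk)

context odd_antiperiodic_walk
begin

lemma normalized_wedge: "normalized.wedge a b = wedge a b / (scale a * scale b)"
  by (simp add: normalized.wedge_def wedge_def diff_divide_distrib)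

lemma normalized_edge: "normalized.edge a = edge a / (scale a * scale (Suc a))"
  by (simp add: normalized.edge_def edge_def normalized_wedge)

lemma normalized_wedge_diag: "normalized.wedge a (a + k) = 1"
  using scale_mult[of a] diag_pos[of a] by (simp add: normalized_wedge diag_def)

lemma normalized_wedge_Suc_diag: "normalized.wedge a (a + k + 1) = 1"
proof -
  have e: "a + k + 1 + k = a + n" using n_eq by simp
  have "scale (a + k + 1) * scale (a + k + 1 + k) = diag (a + k + 1)"
    by (rule scale_mult)
  then have "scale (a + k + 1) * scale a = diag (a + k + 1)"
    by (simp only: e scale_add_n)
  then show ?thesis
    using wedge_Suc_diag[of a] diag_pos[of "a + k + 1"] by (simp add: normalized_wedge mult.commute)
qed

lemma normalized_wedge_two:
  "normalized.wedge a (Suc (Suc a))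
     = normalized.edge a + normalized.edge (Suc a)
       - normalized.edge a * normalized.edge (Suc a) * normalized.edge (a + k + 1)"
proof -
  have "normalized.wedge (Suc a) (a + k + 1) = 1" "normalized.wedge a (a + k + 1) = 1"
    "normalized.wedge (Suc (Suc a)) (a + k + 2) = 1" "normalized.wedge (Suc a) (a + k + 2) = 1"
    using normalized_wedge_diag[of "Suc a"] normalized_wedge_Suc_diag[of a]
      normalized_wedge_diag[of "Suc (Suc a)"] normalized_wedge_Suc_diag[of "Suc a"]
    by simp_all
  from det2_chain_identity[OF this[unfolded normalized.wedge_def]] show ?thesis
    by (simp add: normalized.edge_def normalized.wedge_def)
qed

lemma normalized_coef:
  "normalized.coef a = 1 / normalized.edge (Suc a) + 1 / normalized.edge a - normalized.edge (a + k + 1)"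
  using normalized.edge_pos[of a] normalized.edge_pos[of "Suc a"]
  unfolding normalized.coef_def normalized_wedge_two by (simp add: field_simps)

lemma normalized_edge_sum_le:
  "(\<Sum>a<n. normalized.edge a) \<le> (2 - 2 * cos (pi / n)) * (\<Sum>a<n. 1 / normalized.edge a)"
proof -
  have "(\<Sum>a<n. 1 / normalized.edge (a + 1)) = (\<Sum>a<n. 1 / normalized.edge a)"
    by (rule sum_lessThan_shift_periodic) (simp add: normalized.edge_add_n)
  moreover have "(\<Sum>a<n. normalized.edge (a + (k + 1))) = (\<Sum>a<n. normalized.edge a)"
    by (rule sum_lessThan_shift_periodic) (simp add: normalized.edge_add_n)
  ultimately have "(\<Sum>a<n. normalized.coef a) = 2 * (\<Sum>a<n. 1 / normalized.edge a) - (\<Sum>a<n. normalized.edge a)"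
    unfolding normalized_coef by (simp add: sum.distrib sum_subtractf add.assoc)
  then show ?thesis
    using normalized.coef_sum_ge by (simp add: algebra_simps)
qed

lemma normalized_edge_mult:
  "normalized.edge a * normalized.edge (a + k) = edge a * edge (a + k) / (diag a * diag (Suc a))"
  using scale_mult[of a] scale_mult[of "Suc a"] unfolding normalized_edge by (simp add: field_simps)

definition min_edge :: real where
  "min_edge = Min (edge ` {..<n})"

definition max_diag :: real where
  "max_diag = Max (diag ` {..<n})"

lemma min_edge_attained: "\<exists>a<n. min_edge = edge a"
proof -
  have "min_edge \<in> edge ` {..<n}"
    unfolding min_edge_def using n_ge_3 by (intro Min_in) (auto simp: lessThan_empty_iff)
  then show ?thesis by auto
qed

lemma max_diag_attained: "\<exists>a<n. max_diag = diag a"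
proof -
  have "max_diag \<in> diag ` {..<n}"
    unfolding max_diag_def using n_ge_3 by (intro Max_in) (auto simp: lessThan_empty_iff)
  then show ?thesis by auto
qed

lemma min_edge_le: "min_edge \<le> edge a"
proof -
  have "min_edge \<le> edge (a mod n)"
    unfolding min_edge_def using n_ge_3 by (intro Min_le) auto
  then show ?thesis
    using periodic_mod[of edge n a, OF edge_add_n] by simp
qed

lemma diag_le_max_diag: "diag a \<le> max_diag"
proof -
  have "diag (a mod n) \<le> max_diag"
    unfolding max_diag_def using n_ge_3 by (intro Max_ge) auto
  then show ?thesis
    using periodic_mod[of diag n a, OF diag_add_n] by simp
qed

lemma min_edge_pos: "0 < min_edge"
  using min_edge_attained edge_pos by auto

lemma max_diag_pos: "0 < max_diag"
  using diag_pos[of 0] diag_le_max_diag[of 0] by linarith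

lemma edge_mult_ge: "min_edge * min_edge \<le> edge a * edge (a + k)"
  using mult_mono[OF min_edge_le min_edge_le] min_edge_pos edge_pos[of a] by simp

lemma diag_mult_le: "diag a * diag (Suc a) \<le> max_diag * max_diag"
  using mult_mono[OF diag_le_max_diag diag_le_max_diag] max_diag_pos diag_pos[of "Suc a"] by simp

lemma normalized_edge_mult_ge:
  "(min_edge / max_diag)\<^sup>2 \<le> normalized.edge a * normalized.edge (a + k)"
  using edge_mult_ge[of a] diag_mult_le[of a]
  unfolding normalized_edge_mult power_divide
  using diag_pos[of a] diag_pos[of "Suc a"] min_edge_pos edge_pos[of a] edge_pos[of "a + k"]
  by (intro frac_le) (auto simp: power2_eq_square)

lemma normalized_edge_sum_ge:
  "(min_edge / max_diag)\<^sup>2 * (\<Sum>a<n. 1 / normalized.edge a) \<le> (\<Sum>a<n. normalized.edge a)"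
proof -
  have "(min_edge / max_diag)\<^sup>2 / normalized.edge a \<le> normalized.edge (a + k)" for a
    using normalized_edge_mult_ge[of a] normalized.edge_pos[of a]
    by (simp add: pos_divide_le_eq mult.commute)
  then have "(\<Sum>a<n. (min_edge / max_diag)\<^sup>2 / normalized.edge a) \<le> (\<Sum>a<n. normalized.edge (a + k))"
    by (rule sum_mono)
  then show ?thesis
    by (simp add: sum_distrib_left sum_lessThan_shift_periodic normalized.edge_add_n)
qed

lemma min_edge_sq_le: "min_edge\<^sup>2 \<le> (2 - 2 * cos (pi / n)) * max_diag\<^sup>2"
proof -
  have "0 < (\<Sum>a<n. 1 / normalized.edge a)"
    using n_ge_3 normalized.edge_pos by (intro sum_pos) (auto simp: lessThan_empty_iff)
  then have "(min_edge / max_diag)\<^sup>2 \<le> 2 - 2 * cos (pi / n)"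
    using order_trans[OF normalized_edge_sum_ge normalized_edge_sum_le] by simp
  then show ?thesis
    using max_diag_pos by (simp add: power_divide field_simps)
qed

context
  assumes extremal: "min_edge\<^sup>2 = (2 - 2 * cos (pi / n)) * max_diag\<^sup>2"
begin

lemma normalized_edge_mult_extremal:
  "normalized.edge a * normalized.edge (a + k) = (min_edge / max_diag)\<^sup>2"
proof -
  define r where "r = (min_edge / max_diag)\<^sup>2"
  define t where "t a = normalized.edge (a + k) - r / normalized.edge a" for a
  have t_nonneg: "0 \<le> t a" for a
    using normalized_edge_mult_ge[of a] normalized.edge_pos[of a]
    by (simp add: t_def r_def pos_divide_le_eq mult.commute)
  have "r = 2 - 2 * cos (pi / n)"
    using extremal max_diag_pos by (simp add: r_def power_divide)
  then have "(\<Sum>a<n. t a) \<le> 0"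
    using normalized_edge_sum_le
    by (simp add: t_def sum_subtractf sum_distrib_left sum_lessThan_shift_periodic normalized.edge_add_n)
  then have "t a = 0" if "a < n" for a
    using t_nonneg that sum_nonneg_eq_0_iff[of "{..<n}" t] by (simp add: order_antisym sum_nonneg)
  moreover have "t a = t (a mod n)"
  proof (rule periodic_mod)
    show "t (b + n) = t b" for b
      using normalized.edge_add_n[of "b + k"] normalized.edge_add_n[of b] by (simp add: t_def ac_simps)
  qed
  ultimately have "t a = 0"
    using n_ge_3 by simp
  then show ?thesis
    using normalized.edge_pos[of a] by (simp add: t_def r_def field_simps)
qed

lemma edge_diag_extremal: "edge a = min_edge \<and> diag a = max_diag"
proof -
  have prod_eq: "edge a * edge (a + k) * max_diag\<^sup>2 = min_edge\<^sup>2 * (diag a * diag (Suc a))"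
    using normalized_edge_mult_extremal[of a] max_diag_pos diag_pos[of a] diag_pos[of "Suc a"]
    unfolding normalized_edge_mult by (simp add: field_simps)
  from diag_mult_le[of a]
  have "edge a * edge (a + k) * max_diag\<^sup>2 \<le> min_edge * min_edge * max_diag\<^sup>2"
    using prod_eq min_edge_pos by (simp add: power2_eq_square mult_left_mono)
  then have "edge a * edge (a + k) \<le> min_edge * min_edge"
    using max_diag_pos by simp
  then have "edge a = min_edge"
    using min_edge_pos min_edge_le by (intro eq_of_mult_le_sq_lower)
  moreover from edge_mult_ge[of a]
  have "min_edge * min_edge * max_diag\<^sup>2 \<le> edge a * edge (a + k) * max_diag\<^sup>2"
    by (rule mult_right_mono) simp
  then have "min_edge\<^sup>2 * (max_diag * max_diag) \<le> min_edge\<^sup>2 * (diag a * diag (Suc a))"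
    unfolding prod_eq by (simp only: power2_eq_square ac_simps)
  then have "max_diag * max_diag \<le> diag a * diag (Suc a)"
    using min_edge_pos by (simp add: mult_le_cancel_left_pos)
  then have "diag a = max_diag"
    using diag_pos diag_le_max_diag by (intro eq_of_mult_ge_sq_upper)
  ultimately show ?thesis ..
qed

lemma scale_extremal: "scale a = sqrt max_diag"
proof -
  have "scale (Suc b) = scale b" for b
  proof -
    have "scale (Suc b) * scale (Suc b + k) = max_diag" "scale (Suc b + k) * scale (Suc b + k + k) = max_diag"
      using scale_mult[of "Suc b"] scale_mult[of "Suc b + k"] edge_diag_extremal by simp_all
    then have "scale (Suc b) * scale (Suc b + k) = scale (Suc b + k + k) * scale (Suc b + k)"
      by (simp add: mult.commute)
    then have "scale (Suc b) = scale (Suc b + k + k)"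
      using scale_pos[of "Suc b + k"] by simp
    also have "Suc b + k + k = b + n"
      using n_eq by simp
    finally show ?thesis by (simp add: scale_add_n)
  qed
  then have const: "scale b = scale 0" for b
    by (induction b) simp_all
  have "(scale 0)\<^sup>2 = max_diag"
    using scale_mult[of 0] const[of k] edge_diag_extremal by (simp add: power2_eq_square)
  then have "sqrt max_diag = scale 0"
    using scale_pos[of 0] by (intro real_sqrt_unique) simp_all
  then show ?thesis
    using const[of a] by simp
qed

lemma wedge_two_extremal: "wedge a (Suc (Suc a)) = 2 * cos (pi / n) * min_edge"
proof -
  define \<rho> where "\<rho> = min_edge / max_diag"
  have "normalized.edge b = \<rho>" for b
    unfolding normalized_edge using max_diag_pos by (simp add: scale_extremal edge_diag_extremal \<rho>_def)
  then have "normalized.wedge a (Suc (Suc a)) = 2 * \<rho> - \<rho> ^ 3"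
    by (simp add: normalized_wedge_two power3_eq_cube)
  moreover have "normalized.wedge a (Suc (Suc a)) = wedge a (Suc (Suc a)) / max_diag"
    unfolding normalized_wedge using max_diag_pos by (simp add: scale_extremal)
  ultimately have "wedge a (Suc (Suc a)) = max_diag * \<rho> * (2 - \<rho>\<^sup>2)"
    using max_diag_pos by (simp add: field_simps power2_eq_square power3_eq_cube)
  also have "\<rho>\<^sup>2 = 2 - 2 * cos (pi / n)"
    using extremal max_diag_pos by (simp add: \<rho>_def power_divide)
  finally show ?thesis
    using max_diag_pos by (simp add: \<rho>_def)
qed

lemma second_order_recurrence_extremal:
  "x (Suc (Suc a)) = 2 * cos (pi / n) * x (Suc a) - x a"
  "y (Suc (Suc a)) = 2 * cos (pi / n) * y (Suc a) - y a"
proof -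
  have "min_edge * (x (Suc (Suc a)) - (2 * cos (pi / n) * x (Suc a) - x a)) = 0"
    "min_edge * (y (Suc (Suc a)) - (2 * cos (pi / n) * y (Suc a) - y a)) = 0"
    using wedge_three_term_x[of a] wedge_three_term_y[of a]
    by (simp_all add: edge_diag_extremal wedge_two_extremal algebra_simps)
  then show "x (Suc (Suc a)) = 2 * cos (pi / n) * x (Suc a) - x a"
    "y (Suc (Suc a)) = 2 * cos (pi / n) * y (Suc a) - y a"
    using min_edge_pos by simp_all
qed

lemma cos_sin_form_extremal:
  "\<exists>g11 g12 g21 g22. g11 * g22 - g12 * g21 \<noteq> 0 \<and>
     (\<forall>a. x a = g11 * cos (real a * pi / n) + g12 * sin (real a * pi / n)) \<and>
     (\<forall>a. y a = g21 * cos (real a * pi / n) + g22 * sin (real a * pi / n))"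
proof -
  define \<theta> where "\<theta> = pi / n"
  have "0 < \<theta>" "\<theta> < pi"
    using n_ge_3 by (simp_all add: \<theta>_def divide_less_eq)
  then have s: "0 < sin \<theta>"
    by (rule sin_gt_zero)
  have form_x: "x a = x 0 * cos (real a * \<theta>) + (x 1 - cos \<theta> * x 0) / sin \<theta> * sin (real a * \<theta>)"
    and form_y: "y a = y 0 * cos (real a * \<theta>) + (y 1 - cos \<theta> * y 0) / sin \<theta> * sin (real a * \<theta>)" for a
    using s by (intro second_order_recurrence_cos_sin second_order_recurrence_extremal[folded \<theta>_def]; simp)+
  have det: "x 0 * ((y 1 - cos \<theta> * y 0) / sin \<theta>) - (x 1 - cos \<theta> * x 0) / sin \<theta> * y 0 = edge 0 / sin \<theta>"
    using s by (simp add: edge_def wedge_def field_simps)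
  have "x a = x 0 * cos (real a * pi / n) + (x 1 - cos \<theta> * x 0) / sin \<theta> * sin (real a * pi / n)"
    "y a = y 0 * cos (real a * pi / n) + (y 1 - cos \<theta> * y 0) / sin \<theta> * sin (real a * pi / n)" for a
    using form_x[of a] form_y[of a] by (simp_all add: \<theta>_def)
  moreover have "x 0 * ((y 1 - cos \<theta> * y 0) / sin \<theta>) - (x 1 - cos \<theta> * x 0) / sin \<theta> * y 0 \<noteq> 0"
    unfolding det using s edge_pos[of 0] by simp
  ultimately show ?thesis
    by blast
qed

end

end

section \<open>Minors of \<open>2 \<times> n\<close> matrices and the cyclic matrix\<close>

definition minor_ratio :: "nat \<Rightarrow> (nat \<Rightarrow> real \<times> real) \<Rightarrow> real" where
  "minor_ratio n X = Max (minors_set n X) / Min (minors_set n X)"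

lemma finite_minors_set: "finite (minors_set n X)"
proof -
  have "minors_set n X \<subseteq> (\<lambda>(i, j). minor X i j) ` ({..<n} \<times> {..<n})"
    unfolding minors_set_def by force
  then show ?thesis by (rule finite_subset) simp
qed

lemma minors_set_nonempty: "2 \<le> n \<Longrightarrow> minors_set n X \<noteq> {}"
  unfolding minors_set_def by force

lemma minors_set_pos: "totally_positive n X \<Longrightarrow> t \<in> minors_set n X \<Longrightarrow> 0 < t"
  unfolding minors_set_def totally_positive_def by auto

lemma in_rowspan_iff:
  "v \<in> rowspan n X \<longleftrightarrow> (\<exists>a b. \<forall>m<n. v m = a * fst (X m) + b * snd (X m)) \<and> (\<forall>m\<ge>n. v m = 0)"
  unfolding rowspan_def by (auto simp: not_less)
lemma rowspan_eq_imp_transform: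
  assumes "rowspan n X = rowspan n Y"
  obtains a1 b1 a2 b2 where
    "\<And>m. m < n \<Longrightarrow> fst (X m) = a1 * fst (Y m) + b1 * snd (Y m)"
    "\<And>m. m < n \<Longrightarrow> snd (X m) = a2 * fst (Y m) + b2 * snd (Y m)"
proof -
  have "(\<lambda>m. if m < n then fst (X m) else 0) \<in> rowspan n Y"
    unfolding assms[symmetric] in_rowspan_iff by (rule conjI, rule exI[of _ 1], rule exI[of _ 0]) auto
  moreover have "(\<lambda>m. if m < n then snd (X m) else 0) \<in> rowspan n Y"
    unfolding assms[symmetric] in_rowspan_iff by (rule conjI, rule exI[of _ 0], rule exI[of _ 1]) auto
  ultimately obtain a1 b1 a2 b2 where
    "\<forall>m<n. fst (X m) = a1 * fst (Y m) + b1 * snd (Y m)"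
    "\<forall>m<n. snd (X m) = a2 * fst (Y m) + b2 * snd (Y m)"
    unfolding in_rowspan_iff by auto
  then show ?thesis using that by blast
qed
lemma rowspan_eq_of_transform:
  assumes hx: "\<And>m. m < n \<Longrightarrow> fst (X m) = a1 * fst (Y m) + b1 * snd (Y m)"
    and hy: "\<And>m. m < n \<Longrightarrow> snd (X m) = a2 * fst (Y m) + b2 * snd (Y m)"
    and det: "a1 * b2 - b1 * a2 \<noteq> 0"
  shows "rowspan n X = rowspan n Y"
proof (intro set_eqI iffI)
  fix v assume "v \<in> rowspan n X"
  then obtain a b where "\<forall>m<n. v m = a * fst (X m) + b * snd (X m)" "\<forall>m\<ge>n. v m = 0"
    unfolding in_rowspan_iff by blast
  then have "\<forall>m<n. v m = (a * a1 + b * a2) * fst (Y m) + (a * b1 + b * b2) * snd (Y m)"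
    using hx hy by (simp add: algebra_simps)
  then show "v \<in> rowspan n Y"
    using \<open>\<forall>m\<ge>n. v m = 0\<close> unfolding in_rowspan_iff by blast
next
  fix v assume "v \<in> rowspan n Y"
  then obtain a b where v: "\<forall>m<n. v m = a * fst (Y m) + b * snd (Y m)" "\<forall>m\<ge>n. v m = 0"
    unfolding in_rowspan_iff by blast
  define d where "d = a1 * b2 - b1 * a2"
  have N: "(a * b2 - b * a2) * fst (X m) + (b * a1 - a * b1) * snd (X m) = d * (a * fst (Y m) + b * snd (Y m))"
    if "m < n" for m
    unfolding hx[OF that] hy[OF that] d_def by (simp add: algebra_simps)
  moreover have "d \<noteq> 0"
    using det by (simp add: d_def)
  then have "a * fst (Y m) + b * snd (Y m)
      = (a * b2 - b * a2) / d * fst (X m) + (b * a1 - a * b1) / d * snd (X m)" if "m < n" for m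
    unfolding times_divide_eq_left add_divide_distrib[symmetric] N[OF that]
    by (simp add: nonzero_eq_divide_eq mult.commute)
  then have "\<forall>m<n. v m = (a * b2 - b * a2) / d * fst (X m) + (b * a1 - a * b1) / d * snd (X m)"
    using v(1) by simp
  then show "v \<in> rowspan n X"
    using v(2) unfolding in_rowspan_iff by blast
qed

lemma minor_ratio_rowspan_eq:
  assumes n: "2 \<le> n" and span: "rowspan n X = rowspan n Y"
    and X: "totally_positive n X" and Y: "totally_positive n Y"
  shows "minor_ratio n X = minor_ratio n Y"
proof -
  obtain a1 b1 a2 b2 where
    hx: "\<And>m. m < n \<Longrightarrow> fst (X m) = a1 * fst (Y m) + b1 * snd (Y m)" and
    hy: "\<And>m. m < n \<Longrightarrow> snd (X m) = a2 * fst (Y m) + b2 * snd (Y m)"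
    using rowspan_eq_imp_transform[OF span] by blast
  define d where "d = a1 * b2 - b1 * a2"
  have minor_X: "minor X i j = d * minor Y i j" if "i < n" "j < n" for i j
    unfolding minor_def d_def hx[OF that(1)] hy[OF that(1)] hx[OF that(2)] hy[OF that(2)]
    by (simp add: algebra_simps)
  have "0 < minor X 0 1" "0 < minor Y 0 1"
    using X Y n unfolding totally_positive_def by auto
  then have d: "0 < d"
    using minor_X[of 0 1] n by (simp add: zero_less_mult_iff)
  have minors_X: "minors_set n X = (\<lambda>t. d * t) ` minors_set n Y"
  proof (intro set_eqI iffI)
    fix t assume "t \<in> minors_set n X"
    then obtain i j where "i < j" "j < n" "t = minor X i j"
      unfolding minors_set_def by blast
    then show "t \<in> (\<lambda>t. d * t) ` minors_set n Y"
      unfolding minors_set_def using minor_X[of i j] by auto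
  next
    fix t assume "t \<in> (\<lambda>t. d * t) ` minors_set n Y"
    then obtain i j where "i < j" "j < n" "t = d * minor Y i j"
      unfolding minors_set_def by blast
    then show "t \<in> minors_set n X"
      unfolding minors_set_def using minor_X[of i j] by force
  qed
  have "mono (\<lambda>t. d * t)"
    using d by (auto intro: monoI mult_left_mono)
  then have "Max (minors_set n X) = d * Max (minors_set n Y)" "Min (minors_set n X) = d * Min (minors_set n Y)"
    unfolding minors_X using finite_minors_set minors_set_nonempty[OF n]
    by (simp_all add: mono_Max_commute mono_Min_commute)
  then show ?thesis
    unfolding minor_ratio_def using d by simp
qed

lemma E_rowspan:
  assumes n: "2 \<le> n" and X: "totally_positive n X"
  shows "E n (rowspan n X) = minor_ratio n X"
proof -
  define Y where "Y = (SOME Y. rowspan n Y = rowspan n X \<and> totally_positive n Y)"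
  have "rowspan n Y = rowspan n X \<and> totally_positive n Y"
    unfolding Y_def by (rule someI[of _ X]) (simp add: X)
  then have "minor_ratio n Y = minor_ratio n X"
    using minor_ratio_rowspan_eq[OF n _ _ X] by blast
  then show ?thesis
    unfolding E_def Y_def[symmetric] minor_ratio_def by (simp add: Let_def)
qed

lemma minor_cyclic:
  assumes "i \<le> j"
  shows "minor (cyclic n) i j = sin (real (j - i) * pi / n)"
proof -
  have "real (j - i) * pi / n = real j * pi / n - real i * pi / n"
    using assms by (simp add: of_nat_diff left_diff_distrib diff_divide_distrib)
  then show ?thesis
    unfolding minor_def cyclic_def by (simp add: sin_diff mult.commute)
qed

lemma totally_positive_cyclic: "totally_positive n (cyclic n)"
  unfolding totally_positive_def
proof (intro allI impI)
  fix i j assume ij: "i < j \<and> j < n"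
  then have "0 < real (j - i) * pi / n" "real (j - i) * pi / n < pi"
    by (simp_all add: divide_less_eq)
  then show "0 < minor (cyclic n) i j"
    using ij by (simp add: minor_cyclic sin_gt_zero)
qed

lemma minor_ratio_cyclic_le:
  assumes "odd n" "3 \<le> n"
  shows "minor_ratio n (cyclic n) \<le> 1 / (2 * sin (pi / (2 * n)))"
proof -
  define s c where "s = sin (pi / (2 * n))" and "c = cos (pi / (2 * n))"
  have "0 < pi / (2 * n)" "pi / (2 * n) < pi / 2"
    using assms by (simp_all add: divide_less_eq)
  then have s: "0 < s" and c: "0 < c"
    unfolding s_def c_def by (simp_all add: sin_gt_zero cos_gt_zero)
  have sin_pi_n: "sin (pi / n) = 2 * s * c"
    unfolding s_def c_def using sin_double[of "pi / (2 * n)"] by simp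
  have bounds: "sin (pi / n) \<le> t \<and> t \<le> c" if t: "t \<in> minors_set n (cyclic n)" for t
  proof -
    obtain i j where "i < j" "j < n" "t = minor (cyclic n) i j"
      using t unfolding minors_set_def by blast
    then show ?thesis
      using minor_cyclic[of i j n] sin_multiple_pi_div_bounds[OF \<open>odd n\<close>, of "j - i"]
      unfolding c_def by simp
  qed
  have nonempty: "minors_set n (cyclic n) \<noteq> {}"
    using assms by (intro minors_set_nonempty) simp
  have "Max (minors_set n (cyclic n)) \<le> c" "sin (pi / n) \<le> Min (minors_set n (cyclic n))"
    using bounds finite_minors_set nonempty by (simp_all add: Max_le_iff Min_ge_iff)
  moreover have "0 < sin (pi / n)"
    using s c by (simp add: sin_pi_n)
  ultimately have "minor_ratio n (cyclic n) \<le> c / sin (pi / n)"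
    unfolding minor_ratio_def using c by (intro frac_le) simp_all
  also have "\<dots> = 1 / (2 * s)"
    using c by (simp add: sin_pi_n)
  finally show ?thesis by (simp add: s_def)
qed

definition antiperiodic_ext :: "nat \<Rightarrow> (nat \<Rightarrow> real) \<Rightarrow> nat \<Rightarrow> real" where
  "antiperiodic_ext n f a = (if even (a div n) then f (a mod n) else - f (a mod n))"

lemma antiperiodic_antiperiodic_ext: "0 < n \<Longrightarrow> antiperiodic n (antiperiodic_ext n f)"
  by (simp add: antiperiodic_def antiperiodic_ext_def)

lemma antiperiodic_ext_less: "a < n \<Longrightarrow> antiperiodic_ext n f a = f a"
  by (simp add: antiperiodic_ext_def)

lemma antiperiodic_ext_wedge_in_minors_set:
  fixes X :: "nat \<Rightarrow> real \<times> real" and n :: nat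
  defines "x \<equiv> antiperiodic_ext n (\<lambda>m. fst (X m))" and "y \<equiv> antiperiodic_ext n (\<lambda>m. snd (X m))"
  assumes "a < b" "b < a + n"
  shows "x a * y b - y a * x b \<in> minors_set n X"
  using window_div_mod_cases[OF assms(3,4)]
proof
  assume "b div n = a div n \<and> a mod n < b mod n"
  then have "x a * y b - y a * x b = minor X (a mod n) (b mod n)"
    by (simp add: x_def y_def antiperiodic_ext_def minor_def)
  then show ?thesis
    unfolding minors_set_def using \<open>b div n = a div n \<and> a mod n < b mod n\<close> assms(3,4) by force
next
  assume "b div n = Suc (a div n) \<and> b mod n < a mod n"
  then have "x a * y b - y a * x b = minor X (b mod n) (a mod n)"
    by (simp add: x_def y_def antiperiodic_ext_def minor_def algebra_simps)
  then show ?thesis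
    unfolding minors_set_def using \<open>b div n = Suc (a div n) \<and> b mod n < a mod n\<close> assms(3,4) by force
qed

lemma odd_antiperiodic_walk_ext:
  assumes "odd n" "3 \<le> n" "totally_positive n X"
  shows "odd_antiperiodic_walk n (antiperiodic_ext n (\<lambda>m. fst (X m))) (antiperiodic_ext n (\<lambda>m. snd (X m))) (n div 2)"
proof unfold_locales
  show "3 \<le> n" "n = 2 * (n div 2) + 1" "1 \<le> n div 2"
    using assms by auto
  show "antiperiodic n (antiperiodic_ext n (\<lambda>m. fst (X m)))" "antiperiodic n (antiperiodic_ext n (\<lambda>m. snd (X m)))"
    using assms by (simp_all add: antiperiodic_antiperiodic_ext)
  show "0 < antiperiodic_ext n (\<lambda>m. fst (X m)) a * antiperiodic_ext n (\<lambda>m. snd (X m)) b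
          - antiperiodic_ext n (\<lambda>m. snd (X m)) a * antiperiodic_ext n (\<lambda>m. fst (X m)) b"
    if "a < b" "b < a + n" for a b
    using minors_set_pos[OF assms(3) antiperiodic_ext_wedge_in_minors_set[OF that]] .
qed

lemma minor_ratio_cyclic_lt:
  assumes "odd n" "3 \<le> n" and X: "totally_positive n X" and "rowspan n X \<noteq> rowspan n (cyclic n)"
  shows "minor_ratio n (cyclic n) < minor_ratio n X"
proof -
  interpret W: odd_antiperiodic_walk n "antiperiodic_ext n (\<lambda>m. fst (X m))"
      "antiperiodic_ext n (\<lambda>m. snd (X m))" "n div 2"
    using odd_antiperiodic_walk_ext[OF assms(1-3)] .
  define s where "s = sin (pi / (2 * n))"
  have "0 < pi / (2 * n)" "pi / (2 * n) < pi"
    using assms by (simp_all add: divide_less_eq)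
  then have s: "0 < s"
    unfolding s_def by (rule sin_gt_zero)
  have mem: "W.min_edge \<in> minors_set n X" "W.max_diag \<in> minors_set n X"
    using W.min_edge_attained W.max_diag_attained W.n_eq W.k_pos
    unfolding W.edge_def W.diag_def W.wedge_def
    by (auto intro!: antiperiodic_ext_wedge_in_minors_set)
  then have "0 < Min (minors_set n X)"
    using Min_in[OF finite_minors_set] minors_set_pos[OF X] by blast
  moreover have "W.max_diag \<le> Max (minors_set n X)" "Min (minors_set n X) \<le> W.min_edge"
    using mem finite_minors_set by (simp_all add: Max_ge Min_le)
  ultimately have "W.max_diag / W.min_edge \<le> minor_ratio n X"
    unfolding minor_ratio_def using W.max_diag_pos by (intro frac_le) simp_all
  moreover have "minor_ratio n (cyclic n) \<le> 1 / (2 * s)"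
    unfolding s_def using assms(1,2) by (rule minor_ratio_cyclic_le)
  moreover have "W.min_edge\<^sup>2 \<le> (2 * s * W.max_diag)\<^sup>2"
    using W.min_edge_sq_le unfolding two_sub_two_cos_pi_div s_def[symmetric]
    by (simp add: power_mult_distrib)
  then have "W.min_edge \<le> 2 * s * W.max_diag"
    by (rule power2_le_imp_le) (use s W.max_diag_pos in simp)
  moreover have "W.min_edge \<noteq> 2 * s * W.max_diag"
  proof
    assume "W.min_edge = 2 * s * W.max_diag"
    then have extremal: "W.min_edge\<^sup>2 = (2 - 2 * cos (pi / n)) * W.max_diag\<^sup>2"
      unfolding two_sub_two_cos_pi_div s_def by (simp add: power_mult_distrib)
    from W.cos_sin_form_extremal[OF extremal] obtain g11 g12 g21 g22 where det: "g11 * g22 - g12 * g21 \<noteq> 0"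
      and fx: "\<forall>a. antiperiodic_ext n (\<lambda>m. fst (X m)) a = g11 * cos (real a * pi / n) + g12 * sin (real a * pi / n)"
      and fy: "\<forall>a. antiperiodic_ext n (\<lambda>m. snd (X m)) a = g21 * cos (real a * pi / n) + g22 * sin (real a * pi / n)"
      by (elim exE conjE)
    have "fst (X m) = g11 * fst (cyclic n m) + g12 * snd (cyclic n m)"
      "snd (X m) = g21 * fst (cyclic n m) + g22 * snd (cyclic n m)" if "m < n" for m
      using fx[rule_format, of m] fy[rule_format, of m] by (simp_all add: cyclic_def antiperiodic_ext_less[OF that])
    then have "rowspan n X = rowspan n (cyclic n)"
      using det by (intro rowspan_eq_of_transform)
    with assms(4) show False ..
  qed
  ultimately have "1 / (2 * s) < W.max_diag / W.min_edge"
    using s W.min_edge_pos by (simp add: field_simps)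
  with \<open>minor_ratio n (cyclic n) \<le> 1 / (2 * s)\<close> \<open>W.max_diag / W.min_edge \<le> minor_ratio n X\<close>
  show ?thesis by linarith
qed

theorem mainTheorem3:
  fixes n :: nat
  assumes "odd n" and "n \<ge> 3"
  shows "rowspan n (cyclic n) \<in> Gr_pos n \<and>
         (\<forall>V \<in> Gr_pos n. V \<noteq> rowspan n (cyclic n) \<longrightarrow> E n (rowspan n (cyclic n)) < E n V)"
proof (intro conjI ballI impI)
  show "rowspan n (cyclic n) \<in> Gr_pos n"
    unfolding Gr_pos_def using totally_positive_cyclic by blast
next
  fix V assume "V \<in> Gr_pos n" "V \<noteq> rowspan n (cyclic n)"
  then obtain X where X: "V = rowspan n X" "totally_positive n X"
    unfolding Gr_pos_def by blast
  have "2 \<le> n" using assms by simp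
  then show "E n (rowspan n (cyclic n)) < E n V"
    using minor_ratio_cyclic_lt[OF assms X(2)] \<open>V \<noteq> _\<close>
    by (simp add: X(1) E_rowspan X(2) totally_positive_cyclic)
qed

end
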